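(* Let $0<\alpha<1$, $h>0$, $x_0\in\mathbb{R}$, and let $G:\mathbb{R}\to\mathbb{R}$ be continuous. Let $U:\{1,2,3,\dots\}\to\mathbb{R}$ be either $U(n)=n^{\alpha-1}$ (the fractional case) or $U(n)=\dfrac{\Gamma(n+\alpha-1)}{\Gamma(n)}$ (the fractional difference case). Let $(x_n)_{n\ge 0}$ be a real sequence satisfying $$x_{n+1}=x_0-\frac{h^{\alpha}}{\Gamma(\alpha)}\sum_{k=0}^{n}G(x_k)\,U(n-k+1),\qquad n\ge 0.$$ Let $W_\alpha=\sum_{n=1}^{\infty}\bigl[U(2n-1)-U(2n)\bigr]$ (a convergent series). Suppose that the limits $x_o=\lim_{n\to\infty}x_{2n+1}$ and $x_e=\lim_{n\to\infty}x_{2n}$ exist in $\mathbb{R}$ (an asymptotic period-two sink). Then $$G(x_o)+G(x_e)=0,\qquad x_o-x_e=\frac{W_\alpha}{\Gamma(\alpha)}\,h^{\alpha}\bigl[G(x_o)-G(x_e)\bigr].$$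
   Context: The recursion is the common form, for $0<\alpha<1$, of the Riemann–Liouville and Caputo universal fractional maps (kernel $U(n)=n^{\alpha-1}$) and of the Caputo $h$-difference universal map (kernel $U(n)=\Gamma(n+\alpha-1)/\Gamma(n)$, the falling factorial $(n+\alpha-2)^{(\alpha-1)}$); here $G=G_K$ is the nonlinearity of the map. Note $U(1)=1$ in the first case and $U(1)=\Gamma(\alpha)$ in the second. *)

theory Defs
  imports "HOL-Analysis.Analysis"
begin

definition U_frac :: "real \<Rightarrow> nat \<Rightarrow> real" where
  "U_frac \<alpha> n = real n powr (\<alpha> - 1)"

definition U_diff :: "real \<Rightarrow> nat \<Rightarrow> real" where
  "U_diff \<alpha> n = Gamma (real n + \<alpha> - 1) / Gamma (real n)"

text \<open>W_alpha = sum over n \<ge> 1 of U(2n-1) - U(2n), reindexed from 0.\<close>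
definition W_alpha :: "(nat \<Rightarrow> real) \<Rightarrow> real" where
  "W_alpha U = (\<Sum>n. U (2*n + 1) - U (2*n + 2))"

end

theory Submission
  imports Defs
begin

text \<open>Write \<open>x N = x 0 - c * S N\<close> with \<open>c = h powr \<alpha> / Gamma \<alpha>\<close> and
  \<open>S N = (\<Sum>k<N. G (x k) * U (N - k))\<close>. Both kernels are positive, nonincreasing, null and
  not summable. Along a period-two sink \<open>G (x k) = s + (-1)^k * d + o(1)\<close>, with \<open>s\<close> and
  \<open>d\<close> the mean and half-difference of \<open>G x_e\<close> and \<open>G x_o\<close>. Convolving \<open>U\<close> with
  the constant \<open>1\<close> diverges, convolving it with \<open>(-1)^k\<close> stays bounded by \<open>U 1\<close>, and
  convolving it with a null sequence is negligible against the former (a Toeplitz argument); as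
  \<open>S\<close> is bounded, \<open>s = 0\<close>. The increments \<open>S (2*n+1) - S (2*n)\<close> of the alternating
  part tend to \<open>2 * W_alpha U\<close> and those of the null part tend to \<open>0\<close>, whence
  \<open>x_o - x_e = - 2 * c * d * W_alpha U\<close>.\<close>

lemma LIMSEQ_even_odd:
  fixes f :: "nat \<Rightarrow> 'a::metric_space"
  assumes "(\<lambda>n. f (2*n)) \<longlonglongrightarrow> L" and "(\<lambda>n. f (2*n+1)) \<longlonglongrightarrow> L"
  shows "f \<longlonglongrightarrow> L"
proof (rule metric_LIMSEQ_I)
  fix r :: real assume r: "0 < r"
  obtain n1 where n1: "\<forall>n\<ge>n1. dist (f (2*n)) L < r" using metric_LIMSEQ_D[OF assms(1) r] by blast
  obtain n2 where n2: "\<forall>n\<ge>n2. dist (f (2*n+1)) L < r" using metric_LIMSEQ_D[OF assms(2) r] by blast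
  show "\<exists>no. \<forall>n\<ge>no. dist (f n) L < r"
  proof (intro exI allI impI)
    fix n assume n: "2*n1 + 2*n2 \<le> n"
    show "dist (f n) L < r"
    proof (cases "even n")
      case True then obtain m where "n = 2*m" by blast
      then show ?thesis using n1 n by auto
    next
      case False then obtain m where "n = 2*m+1" using oddE by blast
      then show ?thesis using n2 n by auto
    qed
  qed
qed

lemma LIMSEQ_even_odd_periodic:
  fixes f :: "nat \<Rightarrow> real"
  assumes "(\<lambda>n. f (2*n)) \<longlonglongrightarrow> a" and "(\<lambda>n. f (2*n+1)) \<longlonglongrightarrow> b"
  shows "(\<lambda>k. f k - (a + b) / 2 - (-1)^k * ((a - b) / 2)) \<longlonglongrightarrow> 0"
proof (rule LIMSEQ_even_odd)
  have "(\<lambda>n. f (2*n) - (a + b) / 2 - (-1)^(2*n) * ((a - b) / 2)) = (\<lambda>n. f (2*n) - a)"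
    by (rule ext) (simp add: field_simps)
  then show "(\<lambda>n. f (2*n) - (a + b) / 2 - (-1)^(2*n) * ((a - b) / 2)) \<longlonglongrightarrow> 0"
    using tendsto_diff[OF assms(1) tendsto_const[of a]] by simp
  have "(\<lambda>n. f (2*n+1) - (a + b) / 2 - (-1)^(2*n+1) * ((a - b) / 2)) = (\<lambda>n. f (2*n+1) - b)"
    by (rule ext) (simp add: field_simps)
  then show "(\<lambda>n. f (2*n+1) - (a + b) / 2 - (-1)^(2*n+1) * ((a - b) / 2)) \<longlonglongrightarrow> 0"
    using tendsto_diff[OF assms(2) tendsto_const[of b]] by simp
qed

lemma Bseq_even_odd:
  fixes f :: "nat \<Rightarrow> real"
  assumes "Bseq (\<lambda>n. f (2*n))" and "Bseq (\<lambda>n. f (2*n+1))"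
  shows "Bseq f"
proof -
  obtain A where A: "\<And>n. norm (f (2*n)) \<le> A" using assms(1) by (auto simp: Bseq_def)
  obtain B where B: "\<And>n. norm (f (2*n+1)) \<le> B" using assms(2) by (auto simp: Bseq_def)
  have "norm (f n) \<le> max A B" for n
  proof (cases "even n")
    case True then obtain m where "n = 2*m" by blast
    then show ?thesis using A[of m] by simp
  next
    case False then obtain m where "n = 2*m+1" using oddE by blast
    then show ?thesis using B[of m] by simp
  qed
  then show ?thesis by (rule BseqI')
qed

lemma abs_weighted_sum_le:
  fixes e w :: "nat \<Rightarrow> real"
  assumes w: "\<And>k. 0 \<le> w k" and wsum: "(\<Sum>k<N. w k) \<le> C"
    and M: "\<And>k. \<bar>e k\<bar> \<le> M" and tail: "\<And>k. K \<le> k \<Longrightarrow> \<bar>e k\<bar> \<le> \<delta>" and \<delta>: "0 \<le> \<delta>"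
  shows "\<bar>\<Sum>k<N. e k * w k\<bar> \<le> \<delta> * C + M * (\<Sum>k<K. w k)"
proof -
  have M0: "0 \<le> M" using M[of 0] by simp
  have "\<bar>\<Sum>k<N. e k * w k\<bar> \<le> (\<Sum>k<N. \<bar>e k\<bar> * w k)"
    using sum_abs[of "\<lambda>k. e k * w k"] by (simp add: abs_mult w)
  also have "\<dots> \<le> (\<Sum>k<N. \<delta> * w k + M * (if k \<in> {..<K} then w k else 0))"
  proof (rule sum_mono)
    fix k
    show "\<bar>e k\<bar> * w k \<le> \<delta> * w k + M * (if k \<in> {..<K} then w k else 0)"
    proof (cases "k < K")
      case True
      have "\<bar>e k\<bar> * w k \<le> M * w k" using M[of k] w[of k] by (rule mult_right_mono)
      moreover have "0 \<le> \<delta> * w k" using \<delta> w[of k] by simp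
      ultimately show ?thesis using True by simp
    next
      case False
      then show ?thesis using tail[of k] w[of k] by (simp add: mult_right_mono)
    qed
  qed
  also have "\<dots> = \<delta> * (\<Sum>k<N. w k) + M * (\<Sum>k\<in>{..<N} \<inter> {..<K}. w k)"
    by (simp add: sum.distrib sum_distrib_left sum.inter_restrict)
  also have "\<dots> \<le> \<delta> * C + M * (\<Sum>k<K. w k)"
    using wsum \<delta> M0 w by (intro add_mono mult_left_mono sum_mono2) auto
  finally show ?thesis .
qed

lemma tendsto_weighted_sum_zero:
  fixes e :: "nat \<Rightarrow> real" and w :: "nat \<Rightarrow> nat \<Rightarrow> real"
  assumes e: "e \<longlonglongrightarrow> 0" and w: "\<And>N k. 0 \<le> w N k"
    and wsum: "\<And>N. (\<Sum>k<N. w N k) \<le> C"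
    and wcol: "\<And>k. (\<lambda>N. w N k) \<longlonglongrightarrow> 0"
  shows "(\<lambda>N. \<Sum>k<N. e k * w N k) \<longlonglongrightarrow> 0"
proof (rule LIMSEQ_I)
  fix r :: real assume r: "0 < r"
  obtain M where M: "0 < M" "\<And>k. \<bar>e k\<bar> \<le> M"
    using convergent_imp_Bseq[OF convergentI[OF e]] by (auto elim: BseqE)
  define \<delta> where "\<delta> = r / 2 / (\<bar>C\<bar> + 1)"
  have \<delta>: "0 < \<delta>" using r by (simp add: \<delta>_def)
  have \<delta>C: "\<delta> * C \<le> r / 2"
  proof -
    have "\<delta> * C \<le> \<delta> * (\<bar>C\<bar> + 1)" using \<delta> by (intro mult_left_mono) auto
    also have "\<dots> = r / 2"
      using abs_ge_zero[of C] by (simp add: \<delta>_def field_simps)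
    finally show ?thesis .
  qed
  obtain K where K: "\<And>k. K \<le> k \<Longrightarrow> \<bar>e k\<bar> \<le> \<delta>"
    using LIMSEQ_D[OF e \<delta>] by (auto intro: less_imp_le)
  have "(\<lambda>N. \<Sum>k<K. w N k) \<longlonglongrightarrow> 0"
    by (rule tendsto_null_sum) (use wcol in auto)
  then have "eventually (\<lambda>N. (\<Sum>k<K. w N k) < r / (2 * M)) sequentially"
    using M(1) r by (intro order_tendstoD(2)) auto
  then obtain N0 where N0: "\<And>N. N0 \<le> N \<Longrightarrow> M * (\<Sum>k<K. w N k) < r / 2"
    using M(1) by (auto simp: eventually_sequentially field_simps)
  show "\<exists>no. \<forall>N\<ge>no. norm ((\<Sum>k<N. e k * w N k) - 0) < r"
  proof (intro exI allI impI)
    fix N assume "N0 \<le> N"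
    have "\<bar>\<Sum>k<N. e k * w N k\<bar> \<le> \<delta> * C + M * (\<Sum>k<K. w N k)"
      using abs_weighted_sum_le[OF w wsum M(2) K] \<delta> by simp
    then show "norm ((\<Sum>k<N. e k * w N k) - 0) < r" using \<delta>C N0[OF \<open>N0 \<le> N\<close>] by simp
  qed
qed

definition kernel_conv :: "(nat \<Rightarrow> real) \<Rightarrow> (nat \<Rightarrow> real) \<Rightarrow> nat \<Rightarrow> real" where
  "kernel_conv U g N = (\<Sum>k<N. g k * U (N - k))"

lemma kernel_conv_Suc: "kernel_conv U g (Suc N) = (\<Sum>k<N. g k * U (Suc N - k)) + g N * U 1"
  by (simp add: kernel_conv_def)

lemma kernel_conv_one: "kernel_conv U (\<lambda>_. 1) N = (\<Sum>i<N. U (Suc i))"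
proof -
  have "kernel_conv U (\<lambda>_. 1) N = (\<Sum>k<N. U (Suc (N - Suc k)))"
    unfolding kernel_conv_def by (rule sum.cong) (auto simp: Suc_diff_Suc)
  also have "\<dots> = (\<Sum>i<N. U (Suc i))" by (rule sum.nat_diff_reindex)
  finally show ?thesis .
qed

lemma kernel_conv_alternating_Suc:
  "kernel_conv U (\<lambda>k. (-1)^k) (Suc N) = U (Suc N) - kernel_conv U (\<lambda>k. (-1)^k) N"
  unfolding kernel_conv_def by (subst sum.lessThan_Suc_shift) (simp add: sum_negf)

lemma kernel_conv_alternating_even:
  "kernel_conv U (\<lambda>k. (-1)^k) (2*n) = - (\<Sum>i<n. U (2*i+1) - U (2*i+2))"
proof (induction n)
  case 0 then show ?case by (simp add: kernel_conv_def)
next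
  case (Suc n)
  have "kernel_conv U (\<lambda>k. (-1)^k) (2 * Suc n) = kernel_conv U (\<lambda>k. (-1)^k) (Suc (Suc (2*n)))"
    by simp
  then show ?case using Suc by (simp add: kernel_conv_alternating_Suc)
qed

locale long_memory_kernel =
  fixes U :: "nat \<Rightarrow> real"
  assumes pos: "\<And>n. 1 \<le> n \<Longrightarrow> 0 < U n"
    and antimono: "\<And>n. 1 \<le> n \<Longrightarrow> U (Suc n) \<le> U n"
    and tendsto_zero: "U \<longlonglongrightarrow> 0"
    and not_summable: "\<not> summable U"
begin

lemma alternating_conv_bounds:
  assumes "1 \<le> N"
  shows "(odd N \<longrightarrow> U N \<le> kernel_conv U (\<lambda>k. (-1)^k) N \<and> kernel_conv U (\<lambda>k. (-1)^k) N \<le> U 1) \<and>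
         (even N \<longrightarrow> U N - U 1 \<le> kernel_conv U (\<lambda>k. (-1)^k) N \<and> kernel_conv U (\<lambda>k. (-1)^k) N \<le> 0)"
  using assms
proof (induction N rule: dec_induct)
  case base
  then show ?case by (simp add: kernel_conv_def)
next
  case (step n)
  then show ?case using antimono[of n] by (auto simp: kernel_conv_alternating_Suc)
qed

lemma abs_alternating_conv_le: "\<bar>kernel_conv U (\<lambda>k. (-1)^k) N\<bar> \<le> U 1"
proof (cases "N = 0")
  case True then show ?thesis using pos[of 1] by (simp add: kernel_conv_def)
next
  case False
  then have "1 \<le> N" by simp
  with alternating_conv_bounds[OF this] pos[OF this] show ?thesis by (cases "even N") auto
qed

lemma summable_W_alpha_terms: "summable (\<lambda>n. U (2*n+1) - U (2*n+2))"
proof (rule summableI_nonneg_bounded[where x="U 1"])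
  show "0 \<le> U (2*n+1) - U (2*n+2)" for n using antimono[of "2*n+1"] by simp
  show "(\<Sum>i<n. U (2*i+1) - U (2*i+2)) \<le> U 1" for n
    using abs_alternating_conv_le[of "2*n"] kernel_conv_alternating_even[of U n] by simp
qed

lemma alternating_conv_increment_tendsto:
  "(\<lambda>n. kernel_conv U (\<lambda>k. (-1)^k) (2*n+1) - kernel_conv U (\<lambda>k. (-1)^k) (2*n)) \<longlonglongrightarrow> 2 * W_alpha U"
proof -
  have "(\<lambda>n. U (2*n+1)) \<longlonglongrightarrow> 0"
    using LIMSEQ_subseq_LIMSEQ[OF tendsto_zero, of "\<lambda>n. 2*n+1"] by (simp add: strict_mono_def o_def)
  moreover have "(\<lambda>n. \<Sum>i<n. U (2*i+1) - U (2*i+2)) \<longlonglongrightarrow> W_alpha U"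
    unfolding W_alpha_def by (rule summable_LIMSEQ[OF summable_W_alpha_terms])
  ultimately have "(\<lambda>n. U (2*n+1) + 2 * (\<Sum>i<n. U (2*i+1) - U (2*i+2))) \<longlonglongrightarrow> 0 + 2 * W_alpha U"
    by (intro tendsto_intros)
  then show ?thesis
    by (simp add: kernel_conv_alternating_Suc kernel_conv_alternating_even add.commute)
qed

lemma mass_nonneg: "0 \<le> kernel_conv U (\<lambda>_. 1) N"
  unfolding kernel_conv_one by (intro sum_nonneg) (simp add: less_imp_le pos)

lemma mass_at_top: "filterlim (kernel_conv U (\<lambda>_. 1)) at_top sequentially"
proof -
  have nonneg: "0 \<le> U (Suc i)" for i using pos[of "Suc i"] by simp
  have unbounded: "\<exists>n. Z < (\<Sum>i<n. U (Suc i))" for Z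
  proof (rule ccontr)
    assume "\<not> ?thesis"
    then have "summable (\<lambda>i. U (Suc i))"
      by (intro summableI_nonneg_bounded[where x=Z]) (auto simp: not_less nonneg)
    then show False using not_summable summable_Suc_iff by blast
  qed
  have mono: "(\<Sum>i<m. U (Suc i)) \<le> (\<Sum>i<n. U (Suc i))" if "m \<le> n" for m n
    using that nonneg by (intro sum_mono2) auto
  show ?thesis
    unfolding filterlim_at_top eventually_sequentially kernel_conv_one
    using unbounded mono by (meson order.trans less_imp_le)
qed

lemma kernel_shift_tendsto_zero: "(\<lambda>N. U (N - k)) \<longlonglongrightarrow> 0"
  using filterlim_compose[OF tendsto_zero filterlim_minus_const_nat_at_top] .

lemma null_conv_div_mass_tendsto_zero:
  assumes e: "e \<longlonglongrightarrow> 0"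
  shows "(\<lambda>N. kernel_conv U e N / kernel_conv U (\<lambda>_. 1) N) \<longlonglongrightarrow> 0"
proof -
  define w where "w N k = (if k < N then U (N - k) / kernel_conv U (\<lambda>_. 1) N else 0)" for N k
  have "(\<lambda>N. \<Sum>k<N. e k * w N k) \<longlonglongrightarrow> 0"
  proof (rule tendsto_weighted_sum_zero[OF e, where C=1])
    show "0 \<le> w N k" for N k
    proof (cases "k < N")
      case True
      then have "0 \<le> U (N - k)" using pos[of "N - k"] by (simp add: less_imp_le)
      then show ?thesis using True mass_nonneg[of N] by (simp add: w_def)
    qed (simp add: w_def)
    show "(\<Sum>k<N. w N k) \<le> 1" for N
      by (simp add: w_def kernel_conv_def flip: sum_divide_distrib)
    show "(\<lambda>N. w N k) \<longlonglongrightarrow> 0" for k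
    proof (rule Lim_transform_eventually)
      show "(\<lambda>N. U (N - k) * inverse (kernel_conv U (\<lambda>_. 1) N)) \<longlonglongrightarrow> 0"
        using tendsto_mult[OF kernel_shift_tendsto_zero tendsto_inverse_0_at_top[OF mass_at_top]]
        by simp
      show "eventually (\<lambda>N. U (N - k) * inverse (kernel_conv U (\<lambda>_. 1) N) = w N k) sequentially"
        unfolding eventually_sequentially
        by (rule exI[of _ "Suc k"]) (auto simp: w_def field_simps)
    qed
  qed
  then show ?thesis by (simp add: w_def kernel_conv_def sum_divide_distrib)
qed

lemma null_conv_increment_tendsto_zero:
  assumes e: "e \<longlonglongrightarrow> 0"
  shows "(\<lambda>N. kernel_conv U e (Suc N) - kernel_conv U e N) \<longlonglongrightarrow> 0"
proof -
  define w where "w N k = (if k < N then U (N - k) - U (Suc N - k) else 0)" for N k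
  have "(\<lambda>N. \<Sum>k<N. e k * w N k) \<longlonglongrightarrow> 0"
  proof (rule tendsto_weighted_sum_zero[OF e, where C="U 1"])
    show "0 \<le> w N k" for N k
      using antimono[of "N - k"] by (auto simp: w_def Suc_diff_le)
    show "(\<Sum>k<N. w N k) \<le> U 1" for N
    proof -
      have "(\<Sum>k<N. w N k) = kernel_conv U (\<lambda>_. 1) N - (kernel_conv U (\<lambda>_. 1) (Suc N) - U 1)"
        by (simp add: w_def kernel_conv_Suc sum_subtractf) (simp add: kernel_conv_def)
      also have "\<dots> = U 1 - U (Suc N)"
        by (simp add: kernel_conv_one)
      finally show ?thesis using pos[of "Suc N"] by simp
    qed
    show "(\<lambda>N. w N k) \<longlonglongrightarrow> 0" for k
    proof (rule Lim_transform_eventually)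
      show "(\<lambda>N. U (N - k) - U (Suc N - k)) \<longlonglongrightarrow> 0"
        using tendsto_diff[OF kernel_shift_tendsto_zero LIMSEQ_Suc[OF kernel_shift_tendsto_zero]]
        by simp
      show "eventually (\<lambda>N. U (N - k) - U (Suc N - k) = w N k) sequentially"
        unfolding eventually_sequentially by (rule exI[of _ "Suc k"]) (auto simp: w_def)
    qed
  qed
  moreover have "(\<lambda>n. e n * U 1) \<longlonglongrightarrow> 0"
    using tendsto_mult_left_zero[OF e] by simp
  ultimately have "(\<lambda>N. e N * U 1 - (\<Sum>k<N. e k * w N k)) \<longlonglongrightarrow> 0 - 0"
    by (intro tendsto_diff)
  moreover have "kernel_conv U e (Suc N) - kernel_conv U e N = e N * U 1 - (\<Sum>k<N. e k * w N k)" for N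
    by (simp add: kernel_conv_Suc kernel_conv_def w_def right_diff_distrib sum_subtractf)
  ultimately show ?thesis by simp
qed

lemma bounded_div_mass_tendsto_zero:
  assumes "\<And>N. \<bar>f N\<bar> \<le> B"
  shows "(\<lambda>N. f N / kernel_conv U (\<lambda>_. 1) N) \<longlonglongrightarrow> 0"
proof (rule Lim_null_comparison)
  have "norm (f N / kernel_conv U (\<lambda>_. 1) N) \<le> B / kernel_conv U (\<lambda>_. 1) N" for N
    using divide_right_mono[OF assms mass_nonneg] mass_nonneg by (simp add: abs_divide)
  then show "eventually (\<lambda>N. norm (f N / kernel_conv U (\<lambda>_. 1) N) \<le> B / kernel_conv U (\<lambda>_. 1) N) sequentially"
    by simp
  show "(\<lambda>N. B / kernel_conv U (\<lambda>_. 1) N) \<longlonglongrightarrow> 0"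
    by (rule tendsto_divide_0[OF tendsto_const filterlim_at_top_imp_at_infinity[OF mass_at_top]])
qed

lemma kernel_conv_periodic_split:
  "kernel_conv U g N = s * kernel_conv U (\<lambda>_. 1) N + d * kernel_conv U (\<lambda>k. (-1)^k) N
     + kernel_conv U (\<lambda>k. g k - s - (-1)^k * d) N"
  by (simp add: kernel_conv_def algebra_simps sum.distrib sum_subtractf sum_distrib_left)

text \<open>Divide by the divergent mass of the kernel: the bounded left-hand side, the alternating part
  and the null part all become negligible, and only \<open>s\<close> survives.\<close>
lemma mean_zero_if_conv_bounded:
  assumes e: "(\<lambda>k. g k - s - (-1)^k * d) \<longlonglongrightarrow> 0"
    and bounded: "\<And>N. \<bar>kernel_conv U g N\<bar> \<le> R"
  shows "s = 0"
proof -
  let ?m = "kernel_conv U (\<lambda>_. 1)" and ?e = "\<lambda>k. g k - s - (-1)^k * d"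
  have "(\<lambda>N. kernel_conv U g N / ?m N - d * (kernel_conv U (\<lambda>k. (-1)^k) N / ?m N)
             - kernel_conv U ?e N / ?m N) \<longlonglongrightarrow> 0 - d * 0 - 0"
    by (intro tendsto_diff tendsto_mult tendsto_const bounded_div_mass_tendsto_zero[OF bounded]
        bounded_div_mass_tendsto_zero[OF abs_alternating_conv_le] null_conv_div_mass_tendsto_zero[OF e])
  moreover have "eventually (\<lambda>N. 1 \<le> ?m N) sequentially"
    using mass_at_top by (simp add: filterlim_at_top)
  then have "eventually (\<lambda>N. kernel_conv U g N / ?m N - d * (kernel_conv U (\<lambda>k. (-1)^k) N / ?m N)
             - kernel_conv U ?e N / ?m N = s) sequentially"
  proof (rule eventually_mono)
    fix N assume "1 \<le> ?m N"
    then show "kernel_conv U g N / ?m N - d * (kernel_conv U (\<lambda>k. (-1)^k) N / ?m N)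
             - kernel_conv U ?e N / ?m N = s"
      by (simp add: kernel_conv_periodic_split[of g N s d] add_divide_distrib)
  qed
  ultimately have "(\<lambda>N. s) \<longlonglongrightarrow> 0" by (simp add: Lim_transform_eventually)
  then show "s = 0" by (simp add: LIMSEQ_const_iff)
qed

lemma conv_increment_tendsto:
  assumes e: "(\<lambda>k. g k - (-1)^k * d) \<longlonglongrightarrow> 0"
  shows "(\<lambda>n. kernel_conv U g (2*n+1) - kernel_conv U g (2*n)) \<longlonglongrightarrow> 2 * d * W_alpha U"
proof -
  let ?a = "kernel_conv U (\<lambda>k. (-1)^k)" and ?e = "kernel_conv U (\<lambda>k. g k - (-1)^k * d)"
  have "(\<lambda>n. ?e (Suc (2*n)) - ?e (2*n)) \<longlonglongrightarrow> 0"
    using LIMSEQ_subseq_LIMSEQ[OF null_conv_increment_tendsto_zero[OF e], of "\<lambda>n. 2*n"]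
    by (simp add: strict_mono_def o_def)
  then have "(\<lambda>n. d * (?a (2*n+1) - ?a (2*n)) + (?e (Suc (2*n)) - ?e (2*n))) \<longlonglongrightarrow> d * (2 * W_alpha U) + 0"
    by (intro tendsto_intros alternating_conv_increment_tendsto)
  moreover have "kernel_conv U g N = d * ?a N + ?e N" for N
    using kernel_conv_periodic_split[of g N 0 d] by simp
  ultimately show ?thesis by (simp add: algebra_simps)
qed

lemma period_two_sink:
  fixes G :: "real \<Rightarrow> real" and x :: "nat \<Rightarrow> real"
  assumes c: "0 < c"
    and rec: "\<And>N. x N = x 0 - c * kernel_conv U (\<lambda>k. G (x k)) N"
    and G: "continuous_on UNIV G"
    and odd_lim: "(\<lambda>n. x (2*n+1)) \<longlonglongrightarrow> x_o" and even_lim: "(\<lambda>n. x (2*n)) \<longlonglongrightarrow> x_e"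
  shows "G x_o + G x_e = 0 \<and> x_o - x_e = W_alpha U * c * (G x_o - G x_e)"
proof -
  let ?g = "\<lambda>k. G (x k)"
  define d where "d = (G x_e - G x_o) / 2"
  have "(\<lambda>n. ?g (2*n)) \<longlonglongrightarrow> G x_e" "(\<lambda>n. ?g (2*n+1)) \<longlonglongrightarrow> G x_o"
    using G even_lim odd_lim by (auto intro: continuous_on_tendsto_compose)
  from LIMSEQ_even_odd_periodic[OF this]
  have e: "(\<lambda>k. ?g k - (G x_e + G x_o) / 2 - (-1)^k * d) \<longlonglongrightarrow> 0" by (simp add: d_def)
  obtain X where X: "\<And>N. \<bar>x N\<bar> \<le> X"
    using Bseq_even_odd[OF convergent_imp_Bseq[OF convergentI[OF even_lim]]
                          convergent_imp_Bseq[OF convergentI[OF odd_lim]]]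
    by (auto simp: Bseq_def)
  have "\<bar>kernel_conv U ?g N\<bar> \<le> (\<bar>x 0\<bar> + X) / c" for N
    using rec[of N] X[of N] c by (simp add: field_simps abs_mult[symmetric])
  from mean_zero_if_conv_bounded[OF e this] have mean_zero: "G x_o + G x_e = 0" by simp
  with e have "(\<lambda>k. ?g k - (-1)^k * d) \<longlonglongrightarrow> 0" by (simp add: add.commute)
  note increment = tendsto_mult_left[OF conv_increment_tendsto[OF this], of "- c"]
  have "x (2*n+1) - x (2*n) = - c * (kernel_conv U ?g (2*n+1) - kernel_conv U ?g (2*n))" for n
    using rec[of "2*n+1"] rec[of "2*n"] by (simp add: algebra_simps)
  with increment have "(\<lambda>n. x (2*n+1) - x (2*n)) \<longlonglongrightarrow> - c * (2 * d * W_alpha U)"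
    by simp
  moreover have "(\<lambda>n. x (2*n+1) - x (2*n)) \<longlonglongrightarrow> x_o - x_e" by (intro tendsto_diff odd_lim even_lim)
  ultimately have "x_o - x_e = - c * (2 * d * W_alpha U)" by (rule LIMSEQ_unique[rotated])
  with mean_zero show ?thesis by (simp add: d_def algebra_simps)
qed

end

lemma long_memory_kernel_U_frac:
  assumes "0 < \<alpha>" "\<alpha> < 1"
  shows "long_memory_kernel (U_frac \<alpha>)"
proof
  fix n :: nat assume "1 \<le> n"
  then show "0 < U_frac \<alpha> n" by (simp add: U_frac_def)
  show "U_frac \<alpha> (Suc n) \<le> U_frac \<alpha> n"
    unfolding U_frac_def using \<open>1 \<le> n\<close> assms by (intro powr_mono2') auto
next
  show "U_frac \<alpha> \<longlonglongrightarrow> 0"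
    unfolding U_frac_def using assms by (intro tendsto_neg_powr filterlim_real_sequentially) simp
next
  show "\<not> summable (U_frac \<alpha>)"
  proof
    assume "summable (U_frac \<alpha>)"
    then have "summable (\<lambda>n. inverse (real n))"
    proof (rule summable_comparison_test')
      fix n :: nat assume "1 \<le> n"
      then have "real n powr (-1) \<le> real n powr (\<alpha> - 1)" using assms by (intro powr_mono) auto
      then show "norm (inverse (real n)) \<le> U_frac \<alpha> n"
        using \<open>1 \<le> n\<close> by (simp add: U_frac_def powr_neg_one divide_inverse)
    qed
    then show False using not_summable_harmonic by blast
  qed
qed

lemma U_diff_pos:
  assumes "0 < \<alpha>" "1 \<le> n"
  shows "0 < U_diff \<alpha> n"
  using assms by (simp add: U_diff_def)

lemma U_diff_Suc:
  assumes "0 < \<alpha>" "1 \<le> n"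
  shows "U_diff \<alpha> (Suc n) = U_diff \<alpha> n * ((real n + \<alpha> - 1) / real n)"
proof -
  have a: "real n + \<alpha> - 1 \<notin> \<int>\<^sub>\<le>\<^sub>0" and b: "real n \<notin> \<int>\<^sub>\<le>\<^sub>0"
    using assms nonpos_Ints_nonpos by fastforce+
  have "U_diff \<alpha> (Suc n) = Gamma ((real n + \<alpha> - 1) + 1) / Gamma (real n + 1)"
    by (simp add: U_diff_def add_ac)
  also have "\<dots> = ((real n + \<alpha> - 1) * Gamma (real n + \<alpha> - 1)) / (real n * Gamma (real n))"
    by (simp only: Gamma_plus1[OF a] Gamma_plus1[OF b])
  also have "\<dots> = U_diff \<alpha> n * ((real n + \<alpha> - 1) / real n)"
    by (simp add: U_diff_def mult.commute)
  finally show ?thesis .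
qed

lemma U_diff_antimono:
  assumes "0 < \<alpha>" "\<alpha> < 1" "1 \<le> n"
  shows "U_diff \<alpha> (Suc n) \<le> U_diff \<alpha> n"
proof -
  have "(real n + \<alpha> - 1) / real n \<le> 1" "0 \<le> (real n + \<alpha> - 1) / real n"
    using assms by auto
  then show ?thesis
    using U_diff_Suc[OF assms(1,3)] U_diff_pos[OF assms(1,3)]
    by (metis mult_left_le mult.commute less_imp_le)
qed

lemma U_diff_tendsto_zero:
  assumes "0 < \<alpha>" "\<alpha> < 1"
  shows "U_diff \<alpha> \<longlonglongrightarrow> 0"
proof -
  define V where "V i = U_diff \<alpha> (Suc i)" for i
  have V_Suc: "V (Suc i) = V i * (1 - (1 - \<alpha>) / real (Suc i))" for i
    using U_diff_Suc[OF assms(1), of "Suc i"] by (simp add: V_def field_simps)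
  have "decseq V" unfolding V_def by (rule decseq_SucI) (simp add: U_diff_antimono[OF assms])
  moreover have "\<forall>i. 0 \<le> V i" using U_diff_pos[OF assms(1)] by (simp add: V_def less_imp_le)
  ultimately obtain L where VL: "V \<longlonglongrightarrow> L" and L_le: "\<forall>i. L \<le> V i"
    by (rule decseq_convergent)
  have L0: "0 \<le> L" using VL \<open>\<forall>i. 0 \<le> V i\<close> by (intro LIMSEQ_le_const) auto
  have "L = 0"
  proof (rule ccontr)
    assume "L \<noteq> 0"
    text \<open>A positive limit would make the telescoping increments dominate a harmonic series.\<close>
    have "summable (\<lambda>i. L * (1 - \<alpha>) * inverse (real (Suc i)))"
    proof (rule summable_comparison_test'[OF telescope_summable'[OF VL]])
      fix i
      have "L * (1 - \<alpha>) * inverse (real (Suc i)) \<le> V i * (1 - \<alpha>) * inverse (real (Suc i))"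
        using L_le assms by (intro mult_right_mono) auto
      moreover have "V i - V (Suc i) = V i * (1 - \<alpha>) * inverse (real (Suc i))"
        by (simp add: V_Suc field_simps)
      moreover have "0 \<le> L * (1 - \<alpha>) * inverse (real (Suc i))" using L0 assms by simp
      ultimately show "norm (L * (1 - \<alpha>) * inverse (real (Suc i))) \<le> V i - V (Suc i)"
        by simp
    qed
    then have "summable (\<lambda>i. inverse (real (Suc i)))" using L0 \<open>L \<noteq> 0\<close> assms by simp
    then show False using not_summable_harmonic summable_Suc_iff by blast
  qed
  with VL show ?thesis unfolding V_def by (simp add: LIMSEQ_imp_Suc)
qed

lemma U_diff_mult_mono:
  assumes "0 < \<alpha>" "1 / \<alpha> \<le> real n"
  shows "real n * U_diff \<alpha> n \<le> real (Suc n) * U_diff \<alpha> (Suc n)"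
proof -
  have "1 \<le> \<alpha> * real n" using assms by (simp add: pos_divide_le_eq mult.commute)
  then have n: "1 \<le> n" using assms by (cases n) auto
  have "real n * real n \<le> real (Suc n) * (real n + \<alpha> - 1)"
    using \<open>1 \<le> \<alpha> * real n\<close> assms by (simp add: algebra_simps)
  then have "U_diff \<alpha> n * (real n * real n / real n)
      \<le> U_diff \<alpha> n * (real (Suc n) * (real n + \<alpha> - 1) / real n)"
    using U_diff_pos[OF assms(1) n] n by (intro mult_left_mono divide_right_mono) auto
  also have "\<dots> = real (Suc n) * U_diff \<alpha> (Suc n)"
    using U_diff_Suc[OF assms(1) n] by simp
  finally show ?thesis using n by (simp add: mult.commute)
qed

lemma U_diff_not_summable:
  assumes "0 < \<alpha>" "\<alpha> < 1"
  shows "\<not> summable (U_diff \<alpha>)"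
proof
  assume summable: "summable (U_diff \<alpha>)"
  define N0 where "N0 = nat \<lceil>1 / \<alpha>\<rceil> + 1"
  have N0: "1 \<le> N0" "1 / \<alpha> \<le> real N0" unfolding N0_def by linarith+
  define \<kappa> where "\<kappa> = real N0 * U_diff \<alpha> N0"
  have \<kappa>: "0 < \<kappa>" using U_diff_pos[OF assms(1) N0(1)] N0 by (simp add: \<kappa>_def)
  text \<open>Eventually \<open>n * U_diff \<alpha> n\<close> increases, so the kernel dominates a harmonic series.\<close>
  have grow: "\<kappa> \<le> real n * U_diff \<alpha> n" if "N0 \<le> n" for n
    using that
  proof (induction n rule: dec_induct)
    case (step m)
    then have "1 / \<alpha> \<le> real m" using N0(2) by linarith
    then show ?case using U_diff_mult_mono[OF assms(1)] step.IH by (meson order.trans)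
  qed (simp add: \<kappa>_def)
  have "summable (\<lambda>n. \<kappa> * inverse (real n))"
  proof (rule summable_comparison_test'[OF summable])
    fix n assume "N0 \<le> n"
    then show "norm (\<kappa> * inverse (real n)) \<le> U_diff \<alpha> n"
      using grow[of n] \<kappa> N0(1) by (simp add: field_simps)
  qed
  then have "summable (\<lambda>n. inverse (real n))" using \<kappa> by simp
  then show False using not_summable_harmonic by blast
qed

lemma long_memory_kernel_U_diff:
  assumes "0 < \<alpha>" "\<alpha> < 1"
  shows "long_memory_kernel (U_diff \<alpha>)"
  using assms U_diff_pos U_diff_antimono U_diff_tendsto_zero U_diff_not_summable
  by unfold_locales auto

theorem mainTheorem1:
  fixes \<alpha> h :: real and G :: "real \<Rightarrow> real" and U :: "nat \<Rightarrow> real"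
    and x :: "nat \<Rightarrow> real" and x_o x_e :: real
  assumes "0 < \<alpha>" "\<alpha> < 1" "0 < h"
    and "continuous_on UNIV G"
    and "U = U_frac \<alpha> \<or> U = U_diff \<alpha>"
    and "\<And>n. x (Suc n) = x 0 - h powr \<alpha> / Gamma \<alpha> * (\<Sum>k\<le>n. G (x k) * U (n - k + 1))"
    and "(\<lambda>n. x (2*n + 1)) \<longlonglongrightarrow> x_o"
    and "(\<lambda>n. x (2*n)) \<longlonglongrightarrow> x_e"
  shows "G x_o + G x_e = 0 \<and>
         x_o - x_e = W_alpha U / Gamma \<alpha> * h powr \<alpha> * (G x_o - G x_e)"
proof -
  interpret long_memory_kernel U
    using assms(1,2,5) long_memory_kernel_U_frac long_memory_kernel_U_diff by blast
  define c where "c = h powr \<alpha> / Gamma \<alpha>"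
  have "0 < c" using assms(1,3) by (simp add: c_def)
  have "x N = x 0 - c * kernel_conv U (\<lambda>k. G (x k)) N" for N
  proof (cases N)
    case (Suc n)
    have "(\<Sum>k\<le>n. G (x k) * U (n - k + 1)) = kernel_conv U (\<lambda>k. G (x k)) (Suc n)"
      unfolding kernel_conv_def lessThan_Suc_atMost by (rule sum.cong) (auto simp: Suc_diff_le)
    then show ?thesis using assms(6)[of n] Suc by (simp add: c_def)
  qed (simp add: kernel_conv_def)
  from period_two_sink[OF \<open>0 < c\<close> this assms(4,7,8)] show ?thesis
    by (simp add: c_def)
qed

end
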